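(* Let $\lambda$ be a nonempty partition and $\tau=(i,j)$ a corner cell of its Young diagram ($j=\lambda_i$ and either $i=\ell$ or $\lambda_{i+1}<\lambda_i$). Let $\hat\lambda$ be $\lambda$ with the cell $\tau$ removed, $\alpha=(\lambda_1-j,\dots,\lambda_{i-1}-j)$ (zero parts discarded) and $\beta=(\lambda_{i+1},\dots,\lambda_\ell)$. Then $$N(\lambda)=N(\hat\lambda)\cdot N(\mathbb 1)+N(\alpha)\cdot N(\beta)=N(\hat\lambda)+N(\alpha)\,N(\beta).$$
   Context: A partition $\lambda=(\lambda_1\ge\dots\ge\lambda_\ell>0)$ is identified with its Young (Ferrers) diagram $\{(r,c):1\le r\le\ell,\ 1\le c\le\lambda_r\}$. For partitions $\mu,\lambda$, $\mu\subseteq\lambda$ means $\mu_k\le\lambda_k$ for all $k$. The Ferrers set $\mathcal F(\lambda)$ is the set of all partitions $\mu\subseteq\lambda$ (including the empty one), equivalently the set of Dyck/lattice paths whose Ferrers diagram is contained in that of $\lambda$; $N(\lambda)=|\mathcal F(\lambda)|$, and the empty diagram $\mathbb 1$ has $N(\mathbb 1)=1$. *)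

theory Defs
  imports Main
begin

text \<open>A partition is a weakly decreasing list of positive naturals; the list
  [lambda_1, ..., lambda_l] is stored 0-based, i.e. lambda_k = lam ! (k-1).\<close>
definition is_partition :: "nat list \<Rightarrow> bool" where
  "is_partition xs \<longleftrightarrow> sorted_wrt (\<ge>) xs \<and> (\<forall>x\<in>set xs. 0 < x)"

definition part :: "nat list \<Rightarrow> nat \<Rightarrow> nat" where
  "part xs k = (if k < length xs then xs ! k else 0)"

definition part_subseteq :: "nat list \<Rightarrow> nat list \<Rightarrow> bool" where
  "part_subseteq mu lam \<longleftrightarrow> (\<forall>k. part mu k \<le> part lam k)"

definition ferrers :: "nat list \<Rightarrow> nat list set" where
  "ferrers lam = {mu. is_partition mu \<and> part_subseteq mu lam}"

definition N :: "nat list \<Rightarrow> nat" where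
  "N lam = card (ferrers lam)"

end

theory Submission
  imports Defs
begin

text \<open>Via its row lengths, a partition inside \<open>\<lambda>\<close> is an antitone function \<open>g \<le> \<lambda>\<close> on \<open>\<nat>\<close>,
  so \<open>N(\<lambda>)\<close> counts such functions. Those with \<open>g i < \<lambda> i\<close> are exactly the ones below
  \<open>\<lambda>\<close> with the cell \<open>\<tau>\<close> removed (a partition because \<open>\<tau>\<close> is a corner). Those with
  \<open>g i = \<lambda> i\<close> contain, by antitonicity, the rectangle of rows \<open>\<le> i\<close> and columns \<open>\<le> \<lambda> i\<close>;
  cutting it out splits \<open>g\<close> into the rows above, shortened by \<open>\<lambda> i\<close> and hence bounded by
  \<open>\<alpha>\<close>, and the rows below, bounded by \<open>\<beta>\<close>, and every such pair glues back.\<close>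

definition antimono_below :: "(nat \<Rightarrow> nat) \<Rightarrow> (nat \<Rightarrow> nat) set" where
  "antimono_below b = {g. antimono g \<and> g \<le> b}"

lemma antimono_below_mono: "b \<le> b' \<Longrightarrow> antimono_below b \<subseteq> antimono_below b'"
  unfolding antimono_below_def by (auto intro: order_trans)

lemma antimono_part_iff: "antimono (part xs) \<longleftrightarrow> sorted_wrt (\<ge>) xs"
proof
  assume "antimono (part xs)"
  then show "sorted_wrt (\<ge>) xs"
    unfolding sorted_wrt_iff_nth_less
    by (metis antimonoD less_imp_le order.strict_trans part_def)
next
  assume "sorted_wrt (\<ge>) xs"
  then show "antimono (part xs)"
    unfolding antimono_def part_def sorted_wrt_iff_nth_less
    by (auto simp: le_less)
qed

lemma part_Cons_Suc: "part (x # xs) (Suc k) = part xs k"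
  by (simp add: part_def)

lemma part_filter_pos:
  assumes "sorted_wrt (\<ge>) xs"
  shows "part (filter (\<lambda>x. 0 < x) xs) = part xs"
proof
  fix k show "part (filter (\<lambda>x. 0 < x) xs) k = part xs k"
    using assms
  proof (induction xs arbitrary: k)
    case Nil then show ?case by (simp add: part_def)
  next
    case (Cons x xs)
    show ?case
    proof (cases "0 < x")
      case True
      have "part (filter (\<lambda>x. 0 < x) xs) n = part xs n" for n
        using Cons by simp
      with True show ?thesis by (cases k) (simp_all add: part_def[of "x # _"] part_Cons_Suc)
    next
      case False
      with Cons.prems have zero: "\<forall>y\<in>set (x # xs). y = 0" by auto
      then have "filter (\<lambda>x. 0 < x) (x # xs) = []" by (simp add: filter_False)
      moreover have "part (x # xs) k = 0"
        using zero nth_mem[of k "x # xs"] by (auto simp: part_def simp del: set_simps)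
      ultimately show ?thesis by (simp add: part_def)
    qed
  qed
qed

lemma part_pos_iff: "is_partition xs \<Longrightarrow> 0 < part xs k \<longleftrightarrow> k < length xs"
  unfolding is_partition_def part_def by auto

lemma part_eq_imp_eq:
  assumes "is_partition xs" "is_partition ys" and "part xs = part ys"
  shows "xs = ys"
proof -
  have "length xs = length ys"
    using part_pos_iff[OF assms(1)] part_pos_iff[OF assms(2)] assms(3) by (metis nat_neq_iff)
  then show ?thesis
    using assms(3) by (metis nth_equalityI part_def)
qed

lemma inj_on_part_ferrers: "inj_on part (ferrers lam)"
  by (auto intro!: inj_onI part_eq_imp_eq simp: ferrers_def)

lemma part_upt_map: "part (map g [0..<n]) k = (if k < n then g k else 0)"
  by (simp add: part_def)

lemma part_image_ferrers: "part ` ferrers lam = antimono_below (part lam)"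
proof
  show "part ` ferrers lam \<subseteq> antimono_below (part lam)"
    by (auto simp: antimono_below_def ferrers_def part_subseteq_def le_fun_def
        is_partition_def antimono_part_iff)
next
  show "antimono_below (part lam) \<subseteq> part ` ferrers lam"
  proof
    fix g assume "g \<in> antimono_below (part lam)"
    then have anti: "antimono g" and below: "g \<le> part lam"
      by (auto simp: antimono_below_def)
    define mu where "mu = filter (\<lambda>x. 0 < x) (map g [0..<length lam])"
    have sorted: "sorted_wrt (\<ge>) (map g [0..<length lam])"
      unfolding sorted_wrt_map
      by (rule sorted_wrt_mono_rel[OF _ sorted_wrt_upt]) (simp add: antimonoD[OF anti])
    have "part (map g [0..<length lam]) = g"
    proof
      fix k show "part (map g [0..<length lam]) k = g k"
        using le_funD[OF below, of k] by (auto simp: part_upt_map part_def)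
    qed
    then have "part mu = g"
      unfolding mu_def using part_filter_pos[OF sorted] by simp
    moreover have "is_partition mu"
      unfolding mu_def is_partition_def using sorted by (simp add: sorted_wrt_filter)
    ultimately have "mu \<in> ferrers lam"
      using below by (simp add: ferrers_def part_subseteq_def le_fun_def)
    with \<open>part mu = g\<close> show "g \<in> part ` ferrers lam" by blast
  qed
qed

lemma N_eq_card_antimono_below: "N lam = card (antimono_below (part lam))"
  unfolding N_def by (metis card_image inj_on_part_ferrers part_image_ferrers)

lemma finite_ferrers: "finite (ferrers lam)"
proof (rule finite_subset)
  show "ferrers lam \<subseteq> {xs. set xs \<subseteq> {..sum_list lam} \<and> length xs \<le> length lam}"
  proof (rule subsetI, rule CollectI, rule conjI)
    fix mu assume mu: "mu \<in> ferrers lam"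
    then have below: "\<And>k. part mu k \<le> part lam k" and "is_partition mu"
      by (auto simp: ferrers_def part_subseteq_def)
    then show len: "length mu \<le> length lam"
      using below[of "length lam"] part_pos_iff[of mu "length lam"] by (simp add: part_def)
    show "set mu \<subseteq> {..sum_list lam}"
    proof
      fix y assume "y \<in> set mu"
      then obtain k where k: "k < length mu" "y = mu ! k" by (auto simp: in_set_conv_nth)
      then have "y \<le> lam ! k" using below[of k] len by (simp add: part_def)
      also have "\<dots> \<le> sum_list lam" using k len by (intro member_le_sum_list) simp_all
      finally show "y \<in> {..sum_list lam}" by simp
    qed
  qed
  show "finite {xs. set xs \<subseteq> {..sum_list lam} \<and> length xs \<le> length lam}"
    by (rule finite_lists_length_le) simp
qed

lemma finite_antimono_below_part: "finite (antimono_below (part lam))"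
  using finite_ferrers part_image_ferrers by (metis finite_imageI)

lemma N_Nil: "N [] = 1"
proof -
  have "antimono_below (part []) = {\<lambda>_. 0}"
    by (auto simp: antimono_below_def part_def le_fun_def antimono_def)
  then show ?thesis by (simp add: N_eq_card_antimono_below)
qed

lemma antimono_below_split:
  assumes "0 < b i"
  shows "antimono_below b = antimono_below (b(i := b i - 1)) \<union> {g \<in> antimono_below b. g i = b i}"
    and "antimono_below (b(i := b i - 1)) \<inter> {g \<in> antimono_below b. g i = b i} = {}"
proof -
  have "g \<le> b \<longleftrightarrow> g \<le> b(i := b i - 1) \<or> (g \<le> b \<and> g i = b i)" for g :: "nat \<Rightarrow> nat"
  proof
    assume "g \<le> b"
    then show "g \<le> b(i := b i - 1) \<or> (g \<le> b \<and> g i = b i)"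
      by (cases "g i = b i") (auto simp: le_fun_def dest: spec[of _ i])
  next
    assume "g \<le> b(i := b i - 1) \<or> (g \<le> b \<and> g i = b i)"
    moreover have "b(i := b i - 1) \<le> b" by (simp add: le_fun_def)
    ultimately show "g \<le> b" by (auto intro: order_trans)
  qed
  then show "antimono_below b = antimono_below (b(i := b i - 1)) \<union> {g \<in> antimono_below b. g i = b i}"
    unfolding antimono_below_def by blast
  show "antimono_below (b(i := b i - 1)) \<inter> {g \<in> antimono_below b. g i = b i} = {}"
    using assms by (force simp: antimono_below_def le_fun_def dest: spec[of _ i])
qed

definition rows_above :: "(nat \<Rightarrow> nat) \<Rightarrow> nat \<Rightarrow> nat \<Rightarrow> nat" where
  "rows_above g i k = (if k < i then g k - g i else 0)"

definition rows_below :: "(nat \<Rightarrow> nat) \<Rightarrow> nat \<Rightarrow> nat \<Rightarrow> nat" where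
  "rows_below g i k = g (k + Suc i)"

definition glue_at :: "nat \<Rightarrow> nat \<Rightarrow> (nat \<Rightarrow> nat) \<Rightarrow> (nat \<Rightarrow> nat) \<Rightarrow> nat \<Rightarrow> nat" where
  "glue_at i j a c k = (if k < i then a k + j else if k = i then j else c (k - Suc i))"

lemma antimono_rows_above: "antimono g \<Longrightarrow> antimono (rows_above g i)"
  unfolding rows_above_def antimono_def by (auto intro: diff_le_mono)

lemma antimono_rows_below: "antimono g \<Longrightarrow> antimono (rows_below g i)"
  unfolding rows_below_def antimono_def by simp

lemma glue_at_split:
  assumes "antimono g"
  shows "glue_at i (g i) (rows_above g i) (rows_below g i) = g"
proof
  fix k show "glue_at i (g i) (rows_above g i) (rows_below g i) k = g k"
    using antimonoD[OF assms, of k i]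
    by (auto simp: glue_at_def rows_above_def rows_below_def)
qed

lemma split_glue_at:
  assumes "a \<in> antimono_below (rows_above b i)"
  shows "rows_above (glue_at i j a c) i = a" and "rows_below (glue_at i j a c) i = c"
proof -
  have "a k = 0" if "\<not> k < i" for k
    using assms that by (auto simp: antimono_below_def le_fun_def rows_above_def dest: spec[of _ k])
  then show "rows_above (glue_at i j a c) i = a"
    by (auto simp: rows_above_def glue_at_def)
  show "rows_below (glue_at i j a c) i = c"
    by (simp add: rows_below_def glue_at_def fun_eq_iff)
qed

lemma glue_at_in_antimono_below:
  assumes "antimono b"
    and a: "a \<in> antimono_below (rows_above b i)" and c: "c \<in> antimono_below (rows_below b i)"
  shows "glue_at i (b i) a c \<in> antimono_below b"
proof -
  have c_le: "c k \<le> b i" for k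
    using c antimonoD[OF assms(1), of i "k + Suc i"]
    by (auto simp: antimono_below_def le_fun_def rows_below_def dest: spec[of _ k])
  have "antimono (glue_at i (b i) a c)"
  proof
    fix k l :: nat assume "k \<le> l"
    then show "glue_at i (b i) a c l \<le> glue_at i (b i) a c k"
      using a c c_le[of "l - Suc i"]
      by (auto simp: glue_at_def antimono_below_def antimono_def intro: trans_le_add2)
  qed
  moreover have "glue_at i (b i) a c \<le> b"
  proof (rule le_funI)
    fix k
    consider "k < i" | "k = i" | "i < k" by linarith
    then show "glue_at i (b i) a c k \<le> b k"
    proof cases
      case 1
      then show ?thesis using a antimonoD[OF assms(1), of k i]
        by (auto simp: glue_at_def antimono_below_def le_fun_def rows_above_def dest: spec[of _ k])
    next
      case 3
      then show ?thesis using c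
        by (auto simp: glue_at_def antimono_below_def le_fun_def rows_below_def
            dest: spec[of _ "k - Suc i"])
    qed (simp add: glue_at_def)
  qed
  ultimately show ?thesis by (simp add: antimono_below_def)
qed

lemma bij_betw_corner_split:
  assumes "antimono b"
  shows "bij_betw (\<lambda>g. (rows_above g i, rows_below g i)) {g \<in> antimono_below b. g i = b i}
           (antimono_below (rows_above b i) \<times> antimono_below (rows_below b i))"
proof -
  let ?split = "\<lambda>g. (rows_above g i, rows_below g i)"
  let ?glue = "\<lambda>(a, c). glue_at i (b i) a c"
  have "?glue (?split g) = g" if "g \<in> antimono_below b" "g i = b i" for g
    using that glue_at_split[of g i] by (auto simp: antimono_below_def)
  moreover have "?split (?glue (a, c)) = (a, c)" if "a \<in> antimono_below (rows_above b i)" for a c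
    using that split_glue_at by simp
  moreover have "?split g \<in> antimono_below (rows_above b i) \<times> antimono_below (rows_below b i)"
    if "g \<in> antimono_below b" "g i = b i" for g
    using that
    by (auto simp: antimono_below_def antimono_rows_above antimono_rows_below le_fun_def
        rows_above_def rows_below_def diff_le_mono)
  moreover have "?glue (a, c) \<in> {g \<in> antimono_below b. g i = b i}"
    if "a \<in> antimono_below (rows_above b i)" "c \<in> antimono_below (rows_below b i)" for a c
    using that glue_at_in_antimono_below[OF assms] by (simp add: glue_at_def)
  ultimately show ?thesis
    by (intro bij_betw_byWitness[where f' = ?glue]) auto
qed

lemma card_antimono_below_remove_corner:
  assumes "antimono b" and "0 < b i" and "finite (antimono_below b)"
  shows "card (antimono_below b) = card (antimono_below (b(i := b i - 1)))
           + card (antimono_below (rows_above b i)) * card (antimono_below (rows_below b i))"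
proof -
  let ?S = "{g \<in> antimono_below b. g i = b i}"
  have "card (antimono_below b) = card (antimono_below (b(i := b i - 1)) \<union> ?S)"
    using antimono_below_split(1)[of b i] assms(2) by simp
  also have "\<dots> = card (antimono_below (b(i := b i - 1))) + card ?S"
  proof (rule card_Un_disjoint)
    have "b(i := b i - 1) \<le> b" by (simp add: le_fun_def)
    then show "finite (antimono_below (b(i := b i - 1)))"
      using assms(3) antimono_below_mono finite_subset by blast
    show "finite ?S" using assms(3) by simp
    show "antimono_below (b(i := b i - 1)) \<inter> ?S = {}"
      using antimono_below_split(2)[of b i] assms(2) by simp
  qed
  also have "card ?S = card (antimono_below (rows_above b i)) * card (antimono_below (rows_below b i))"
    using bij_betw_same_card[OF bij_betw_corner_split[OF assms(1)]] by (simp add: card_cartesian_product)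
  finally show ?thesis .
qed

lemma antimono_fun_upd_decrement:
  fixes b :: "nat \<Rightarrow> nat"
  assumes "antimono b" and "b (Suc i) < b i"
  shows "antimono (b(i := b i - 1))"
proof
  fix k l :: nat assume "k \<le> l"
  moreover have "b l \<le> b i - 1" if "i < l" for l
    using that antimonoD[OF assms(1), of "Suc i" l] assms(2) by simp
  ultimately show "(b(i := b i - 1)) l \<le> (b(i := b i - 1)) k"
    using antimonoD[OF assms(1), of k i] antimonoD[OF assms(1), of k l]
    by (cases "k = i"; cases "l = i") auto
qed

lemma part_list_update: "i < length xs \<Longrightarrow> part (xs[i := v]) = (part xs)(i := v)"
  by (auto simp: part_def fun_eq_iff)

lemma part_map_diff_take:
  "i < length xs \<Longrightarrow> part (map (\<lambda>x. x - xs ! i) (take i xs)) = rows_above (part xs) i"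
  by (auto simp: part_def rows_above_def fun_eq_iff)

lemma part_drop_Suc: "part (drop (Suc i) xs) = rows_below (part xs) i"
  by (auto simp: part_def rows_below_def fun_eq_iff add.commute)

lemma N_filter_pos:
  "sorted_wrt (\<ge>) xs \<Longrightarrow> N (filter (\<lambda>x. 0 < x) xs) = card (antimono_below (part xs))"
  by (simp add: N_eq_card_antimono_below part_filter_pos)

theorem mainTheorem2:
  fixes lam :: "nat list" and i j :: nat
  assumes "is_partition lam" and "lam \<noteq> []"
    and "i < length lam" and "j = lam ! i"
    and "i = length lam - 1 \<or> lam ! (i + 1) < lam ! i"
  shows "N lam = N (filter (\<lambda>x. 0 < x) (lam[i := j - 1])) * N []
                 + N (filter (\<lambda>x. 0 < x) (map (\<lambda>x. x - j) (take i lam))) * N (drop (i + 1) lam)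
       \<and> N (filter (\<lambda>x. 0 < x) (lam[i := j - 1])) * N []
                 + N (filter (\<lambda>x. 0 < x) (map (\<lambda>x. x - j) (take i lam))) * N (drop (i + 1) lam)
         = N (filter (\<lambda>x. 0 < x) (lam[i := j - 1]))
                 + N (filter (\<lambda>x. 0 < x) (map (\<lambda>x. x - j) (take i lam))) * N (drop (i + 1) lam)"
proof -
  let ?b = "part lam"
  have anti: "antimono ?b"
    using assms(1) by (simp add: antimono_part_iff is_partition_def)
  have j: "j = ?b i"
    using assms(3,4) by (simp add: part_def)
  have "0 < ?b i"
    using part_pos_iff[OF assms(1)] assms(3) by simp
  have corner: "?b (Suc i) < ?b i"
    using assms(3,5) \<open>0 < ?b i\<close> by (auto simp: part_def)
  have "sorted_wrt (\<ge>) (lam[i := j - 1])"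
    using antimono_fun_upd_decrement[OF anti corner] assms(3)
    by (simp add: j antimono_part_iff[symmetric] part_list_update)
  then have N_hat: "N (filter (\<lambda>x. 0 < x) (lam[i := j - 1])) = card (antimono_below (?b(i := ?b i - 1)))"
    using assms(3) by (simp add: N_filter_pos part_list_update j)
  have "sorted_wrt (\<ge>) (map (\<lambda>x. x - j) (take i lam))"
    using antimono_rows_above[OF anti] assms(3,4)
    by (simp add: antimono_part_iff[symmetric] part_map_diff_take)
  then have N_alpha: "N (filter (\<lambda>x. 0 < x) (map (\<lambda>x. x - j) (take i lam)))
      = card (antimono_below (rows_above ?b i))"
    using assms(3,4) by (simp add: N_filter_pos part_map_diff_take)
  have N_beta: "N (drop (i + 1) lam) = card (antimono_below (rows_below ?b i))"
    by (simp add: N_eq_card_antimono_below part_drop_Suc)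
  have "N lam = N (filter (\<lambda>x. 0 < x) (lam[i := j - 1]))
      + N (filter (\<lambda>x. 0 < x) (map (\<lambda>x. x - j) (take i lam))) * N (drop (i + 1) lam)"
    unfolding N_hat N_alpha N_beta N_eq_card_antimono_below[of lam]
    using card_antimono_below_remove_corner[OF anti \<open>0 < ?b i\<close> finite_antimono_below_part] .
  then show ?thesis by (simp add: N_Nil)
qed

end
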